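(* For every $\ell\ge0$, the coefficients of $\hbar^s$, $s\le\ell$, in the asymptotic expansion $$\mathrm{Tr}(t,\hbar)\sim\sum_{m=0}^\infty\frac{(it)^m}{m!}\Big(\sum_{|r|\ge1}\hbar^{|r|-1}c_r(\hbar)\Big(\frac1tD_\theta\Big)^r\Big)^m\frac{e^{\frac{it}{2}\sum_j\theta_j}}{\prod_j(1-e^{it\theta_j})}\Bigg|_{\theta=u}$$ determine the coefficients of $\hbar^s$, $s\le\ell$, in the series $$V(t,\hbar)=\sum_{|r|\ge1}\hbar^{|r|-1}c_r(\hbar)\Big(\frac1tD_\theta\Big)^r\frac{e^{\frac{it}{2}\sum_j\theta_j}}{\prod_j(1-e^{it\theta_j})}\Bigg|_{\theta=u}.$$
   Context: Here $u=(u_1,\dots,u_n)$ has positive entries linearly independent over $\mathbb{Q}$, $D_\theta=-i(\partial_{\theta_1},\dots,\partial_{\theta_n})$, $r\in\mathbb{Z}_{\ge0}^n$, and $c_r(\hbar)=\sum_{i\ge0}c_{r,i}\hbar^{|r|-1+i}$ with $c_r(0)=0$ when $|r|=1$ (the coefficients of the semi-classical Birkhoff canonical form). *)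

theory Defs
  imports "HOL-Complex_Analysis.Complex_Analysis"
begin

text \<open>Functions of theta are taken on C^n (theta :: nat => complex, only theta 0..n-1 used);
  the relevant function is holomorphic in each theta_j, so complex partial derivatives
  agree with the real ones at real points.\<close>

definition multi_idx :: "nat \<Rightarrow> (nat \<Rightarrow> nat) set" where
  "multi_idx n = {r. \<forall>j. n \<le> j \<longrightarrow> r j = 0}"

definition mabs :: "nat \<Rightarrow> (nat \<Rightarrow> nat) \<Rightarrow> nat" where
  "mabs n r = (\<Sum>j<n. r j)"

definition pdiff :: "nat \<Rightarrow> ((nat \<Rightarrow> complex) \<Rightarrow> complex) \<Rightarrow> (nat \<Rightarrow> complex) \<Rightarrow> complex" where
  "pdiff j g = (\<lambda>\<theta>. deriv (\<lambda>z. g (\<theta>(j := z))) (\<theta> j))"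

fun Dmulti :: "nat \<Rightarrow> (nat \<Rightarrow> nat) \<Rightarrow> ((nat \<Rightarrow> complex) \<Rightarrow> complex) \<Rightarrow> (nat \<Rightarrow> complex) \<Rightarrow> complex" where
  "Dmulti 0 r g = g"
| "Dmulti (Suc k) r g = ((\<lambda>h \<theta>. - \<i> * pdiff k h \<theta>) ^^ r k) (Dmulti k r g)"

definition Fth :: "nat \<Rightarrow> real \<Rightarrow> (nat \<Rightarrow> complex) \<Rightarrow> complex" where
  "Fth n t \<theta> = exp (\<i> * of_real t / 2 * (\<Sum>j<n. \<theta> j)) / (\<Prod>j<n. (1 - exp (\<i> * of_real t * \<theta> j)))"

text \<open>hbar-weight of the term c_{r,i} hbar^{|r|-1+|r|-1+i}\<close>
definition wt :: "nat \<Rightarrow> (nat \<Rightarrow> nat) \<Rightarrow> nat \<Rightarrow> nat" where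
  "wt n r i = 2 * mabs n r - 2 + i"

definition terms :: "nat \<Rightarrow> nat \<Rightarrow> ((nat \<Rightarrow> nat) \<times> nat) set" where
  "terms n s = {(r, i). r \<in> multi_idx n \<and> 1 \<le> mabs n r \<and> wt n r i \<le> s}"

text \<open>Pw n u c t m s theta: coefficient of hbar^s in L^m F, where
  L = sum_{|r|>=1} hbar^{|r|-1} c_r(hbar) (1/t D_theta)^r,
  c_r(hbar) = sum_i c r i hbar^{|r|-1+i}.\<close>
primrec Pw :: "nat \<Rightarrow> ((nat \<Rightarrow> nat) \<Rightarrow> nat \<Rightarrow> real) \<Rightarrow> real \<Rightarrow> nat \<Rightarrow> nat
    \<Rightarrow> (nat \<Rightarrow> complex) \<Rightarrow> complex" where
  "Pw n c t 0 s = (if s = 0 then Fth n t else (\<lambda>_. 0))"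
| "Pw n c t (Suc m) s = (\<lambda>\<theta>. \<Sum>(r, i)\<in>terms n s.
      of_real (c r i) * (1 / of_real t) ^ mabs n r * Dmulti n r (Pw n c t m (s - wt n r i)) \<theta>)"

text \<open>coefficient of hbar^s in the expansion of Tr(t,hbar); since L = O(hbar)
  (under the hypothesis c_r(0)=0 for |r|=1), only m <= s contribute.\<close>
definition TrCoef :: "nat \<Rightarrow> (nat \<Rightarrow> real) \<Rightarrow> ((nat \<Rightarrow> nat) \<Rightarrow> nat \<Rightarrow> real) \<Rightarrow> nat \<Rightarrow> real \<Rightarrow> complex" where
  "TrCoef n u c s t = (\<Sum>m\<le>s. (\<i> * of_real t) ^ m / of_nat (fact m) * Pw n c t m s (\<lambda>j. of_real (u j)))"

definition VCoef :: "nat \<Rightarrow> (nat \<Rightarrow> real) \<Rightarrow> ((nat \<Rightarrow> nat) \<Rightarrow> nat \<Rightarrow> real) \<Rightarrow> nat \<Rightarrow> real \<Rightarrow> complex" where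
  "VCoef n u c s t = Pw n c t 1 s (\<lambda>j. of_real (u j))"

definition BNF_coeffs :: "nat \<Rightarrow> ((nat \<Rightarrow> nat) \<Rightarrow> nat \<Rightarrow> real) \<Rightarrow> bool" where
  "BNF_coeffs n c \<longleftrightarrow> (\<forall>r. r \<in> multi_idx n \<and> mabs n r = 1 \<longrightarrow> c r 0 = 0)"

definition tdom :: "nat \<Rightarrow> (nat \<Rightarrow> real) \<Rightarrow> real set" where
  "tdom n u = {t. \<forall>j<n. exp (\<i> * of_real t * of_real (u j)) \<noteq> 1}"

end

theory Submission
  imports Defs
begin

(* Write L = sum_r hbar^(|r|-1) c_r(hbar) (D_theta / t)^r and F for the function of theta
   acted on.  Since c_r(0) = 0 for |r| = 1, every term of L has positive hbar-weight, so the
   hbar^s coefficient of L^m F with m >= 2 only involves coefficients c_(r,i) of weight below s;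
   once those agree, the hbar^s coefficients of Tr determine that of V = L F.  The latter is
   sum c_(r,i) (-i)^|r| prod_j G^(r_j)(t u_j) over the terms of weight exactly s, where
   G(z) = e^(iz/2) / (1 - e^(iz)).  These functions of t are linearly independent: G is
   4 pi-periodic and, by Kronecker's theorem, the line t u is dense in R^n / 4 pi Z^n, which
   reduces the claim to the independence of the products prod_j G^(r_j)(y_j) on (0, 2 pi)^n;
   in one variable this follows from the distinct pole orders of the G^(m) at 0.  Induction on
   s then shows that all coefficients of weight at most l agree. *)

section \<open>Weights of the terms of \<open>L\<^sup>m F\<close>\<close>

abbreviation D_coord :: "nat \<Rightarrow> ((nat \<Rightarrow> complex) \<Rightarrow> complex) \<Rightarrow> (nat \<Rightarrow> complex) \<Rightarrow> complex" where
  "D_coord k \<equiv> \<lambda>h \<theta>. - \<i> * pdiff k h \<theta>"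

lemma Dmulti_zero: "Dmulti k r (\<lambda>_. 0) = (\<lambda>_. 0)"
proof (induction k)
  case 0
  then show ?case by simp
next
  case (Suc k)
  have "(D_coord k ^^ m) (\<lambda>_. 0) = (\<lambda>_. 0)" for m
    by (induction m) (auto simp: pdiff_def)
  with Suc show ?case by simp
qed

lemma finite_terms: "finite (terms n s)"
proof -
  have "r j \<le> s + 2" if "(r, i) \<in> terms n s" "j < n" for r i j
  proof -
    have "r j \<le> mabs n r"
      unfolding mabs_def using that(2) by (intro member_le_sum) auto
    with that(1) show ?thesis by (auto simp: terms_def wt_def)
  qed
  then have "terms n s \<subseteq>
      {r. \<forall>j. (j \<in> {..<n} \<longrightarrow> r j \<in> {..s + 2}) \<and> (j \<notin> {..<n} \<longrightarrow> r j = 0)} \<times> {..s}"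
    unfolding terms_def multi_idx_def wt_def by auto
  then show ?thesis
    by (rule finite_subset) (intro finite_cartesian_product finite_set_of_finite_funs; simp)
qed

lemma terms_mono: "s \<le> k \<Longrightarrow> terms n s \<subseteq> terms n k"
  by (auto simp: terms_def)

lemma Pw_Suc_cong:
  assumes "\<And>r i \<theta>. (r, i) \<in> terms n s \<Longrightarrow>
      of_real (c r i) * Dmulti n r (Pw n c t m (s - wt n r i)) \<theta>
    = of_real (c' r i) * Dmulti n r (Pw n c' t m (s - wt n r i)) \<theta>"
  shows "Pw n c t (Suc m) s = Pw n c' t (Suc m) s"
proof
  fix \<theta>
  show "Pw n c t (Suc m) s \<theta> = Pw n c' t (Suc m) s \<theta>"
    unfolding Pw.simps
  proof (rule sum.cong[OF refl], clarify)
    fix r i assume "(r, i) \<in> terms n s"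
    from assms[OF this, of \<theta>]
    show "of_real (c r i) * (1 / of_real t) ^ mabs n r * Dmulti n r (Pw n c t m (s - wt n r i)) \<theta>
      = of_real (c' r i) * (1 / of_real t) ^ mabs n r * Dmulti n r (Pw n c' t m (s - wt n r i)) \<theta>"
      by (simp add: ac_simps)
  qed
qed

lemma Pw_cong_coeffs:
  assumes "\<forall>(r, i)\<in>terms n k. c r i = c' r i" and "s \<le> k"
  shows "Pw n c t m s = Pw n c' t m s"
  using assms(2)
proof (induction m arbitrary: s)
  case 0
  then show ?case by simp
next
  case (Suc m)
  show ?case
  proof (rule Pw_Suc_cong)
    fix r i \<theta> assume "(r, i) \<in> terms n s"
    with assms(1) terms_mono[OF Suc.prems] have "c r i = c' r i" by blast
    with Suc.IH Suc.prems show "of_real (c r i) * Dmulti n r (Pw n c t m (s - wt n r i)) \<theta>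
      = of_real (c' r i) * Dmulti n r (Pw n c' t m (s - wt n r i)) \<theta>"
      by simp
  qed
qed

lemma BNF_coeffs_weight_0:
  assumes "BNF_coeffs n c" "(r, i) \<in> terms n s" "wt n r i = 0"
  shows "c r i = 0"
proof -
  from assms(2,3) have "r \<in> multi_idx n" "mabs n r = 1" "i = 0"
    by (auto simp: terms_def wt_def)
  with assms(1) show ?thesis by (simp add: BNF_coeffs_def)
qed

lemma Pw_Suc_weight_0: "BNF_coeffs n c \<Longrightarrow> Pw n c t (Suc m) 0 = (\<lambda>_. 0)"
  by (auto simp: BNF_coeffs_weight_0 terms_def intro!: sum.neutral)

text \<open>Terms of weight 0 vanish, so in \<open>L\<^sup>m F\<close> with \<open>m \<ge> 2\<close> every factor of \<open>L\<close>
  carries positive weight and only coefficients of weight below \<open>s\<close> enter.\<close>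
lemma Pw_Suc_Suc_cong:
  assumes c: "BNF_coeffs n c" and c': "BNF_coeffs n c'"
    and lower: "\<forall>(r, i)\<in>terms n s. wt n r i < s \<longrightarrow> c r i = c' r i"
  shows "Pw n c t (Suc (Suc m)) s = Pw n c' t (Suc (Suc m)) s"
proof (rule Pw_Suc_cong)
  fix r i \<theta> assume ri: "(r, i) \<in> terms n s"
  have "wt n r i \<le> s" using ri by (simp add: terms_def)
  then consider "wt n r i = s" | "wt n r i = 0" | "0 < wt n r i" "wt n r i < s"
    by linarith
  then show "of_real (c r i) * Dmulti n r (Pw n c t (Suc m) (s - wt n r i)) \<theta>
    = of_real (c' r i) * Dmulti n r (Pw n c' t (Suc m) (s - wt n r i)) \<theta>"
  proof cases
    case 1
    then have "s - wt n r i = 0" by simp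
    then show ?thesis
      by (simp only: Pw_Suc_weight_0[OF c] Pw_Suc_weight_0[OF c'] Dmulti_zero mult_zero_right)
  next
    case 2
    then show ?thesis using BNF_coeffs_weight_0[OF c ri] BNF_coeffs_weight_0[OF c' ri] by simp
  next
    case 3
    have "\<forall>(r, i)\<in>terms n (s - 1). c r i = c' r i"
      using lower 3 by (auto simp: terms_def)
    then have "Pw n c t (Suc m) (s - wt n r i) = Pw n c' t (Suc m) (s - wt n r i)"
      by (rule Pw_cong_coeffs) (use 3 in simp)
    with 3 lower ri show ?thesis by auto
  qed
qed

lemma VCoef_eq_of_TrCoef_eq:
  assumes c: "BNF_coeffs n c" and c': "BNF_coeffs n c'"
    and lower: "\<forall>(r, i)\<in>terms n s. wt n r i < s \<longrightarrow> c r i = c' r i"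
    and tr: "TrCoef n u c s t = TrCoef n u c' s t" and "t \<noteq> 0"
  shows "VCoef n u c s t = VCoef n u c' s t"
proof (cases "s = 0")
  case True
  then show ?thesis by (simp only: VCoef_def One_nat_def Pw_Suc_weight_0[OF c] Pw_Suc_weight_0[OF c'])
next
  case False
  define f where "f c m = (\<i> * of_real t) ^ m / of_nat (fact m) * Pw n c t m s (\<lambda>j. of_real (u j))"
    for c m
  have other: "f c m = f c' m" if "m \<noteq> 1" for m
  proof (cases m)
    case (Suc k)
    with that obtain k' where "m = Suc (Suc k')" by (cases k) auto
    then show ?thesis using Pw_Suc_Suc_cong[OF c c' lower] by (simp add: f_def)
  qed (simp add: f_def)
  have one: "1 \<in> {..s}" using False by simp
  have "f c 1 + (\<Sum>m\<in>{..s} - {1}. f c m) = f c' 1 + (\<Sum>m\<in>{..s} - {1}. f c' m)"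
    using tr unfolding TrCoef_def sum.remove[OF finite_atMost one] f_def .
  moreover have "(\<Sum>m\<in>{..s} - {1}. f c m) = (\<Sum>m\<in>{..s} - {1}. f c' m)"
    using other by (intro sum.cong) auto
  ultimately have "f c 1 = f c' 1" by simp
  with \<open>t \<noteq> 0\<close> show ?thesis by (simp add: f_def VCoef_def)
qed

section \<open>Derivatives of products of one-variable functions\<close>

definition prod_fun :: "nat \<Rightarrow> (nat \<Rightarrow> complex \<Rightarrow> complex) \<Rightarrow> (nat \<Rightarrow> complex) \<Rightarrow> complex" where
  "prod_fun n F \<theta> = (\<Prod>j<n. F j (\<theta> j))"

lemma prod_fun_upd:
  "k < n \<Longrightarrow> prod_fun n (F(k := f)) \<theta> = f (\<theta> k) * (\<Prod>j\<in>{..<n} - {k}. F j (\<theta> j))"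
  unfolding prod_fun_def by (subst prod.remove[of _ k]) (auto intro!: prod.cong)

lemma pdiff_cong:
  assumes "open S" and "\<forall>\<theta>\<in>{..<n} \<rightarrow> S. h \<theta> = h' \<theta>" and "\<theta> \<in> {..<n} \<rightarrow> S"
  shows "pdiff k h \<theta> = pdiff k h' \<theta>"
proof (cases "k < n")
  case True
  have "\<forall>\<^sub>F z in nhds (\<theta> k). z \<in> S"
    using assms True by (intro eventually_nhds_in_open) auto
  then have "\<forall>\<^sub>F z in nhds (\<theta> k). h (\<theta>(k := z)) = h' (\<theta>(k := z))"
  proof eventually_elim
    case (elim z)
    with assms(3) have "\<theta>(k := z) \<in> {..<n} \<rightarrow> S" by auto
    with assms(2) show ?case by blast
  qed
  then show ?thesis
    unfolding pdiff_def by (rule deriv_cong_ev) simp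
next
  case False
  with assms have "h (\<theta>(k := z)) = h' (\<theta>(k := z))" for z
    by auto
  then show ?thesis
    unfolding pdiff_def by simp
qed

lemma D_coord_iter_cong:
  assumes "open S" and "\<forall>\<theta>\<in>{..<n} \<rightarrow> S. h \<theta> = h' \<theta>"
  shows "\<forall>\<theta>\<in>{..<n} \<rightarrow> S. (D_coord k ^^ m) h \<theta> = (D_coord k ^^ m) h' \<theta>"
proof (induction m)
  case 0
  then show ?case using assms(2) by simp
next
  case (Suc m)
  then show ?case using pdiff_cong[OF assms(1) Suc] by simp
qed

lemma pdiff_prod_fun:
  assumes "k < n" "open S" "F k holomorphic_on S" "\<theta> \<in> {..<n} \<rightarrow> S"
  shows "pdiff k (prod_fun n F) \<theta> = prod_fun n (F(k := deriv (F k))) \<theta>"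
proof -
  have "(\<lambda>z. prod_fun n F (\<theta>(k := z))) = (\<lambda>z. (\<Prod>j\<in>{..<n} - {k}. F j (\<theta> j)) * F k z)"
    using prod_fun_upd[OF assms(1), of "F" "F k"] by (auto simp: mult.commute intro!: prod.cong)
  moreover have "F k field_differentiable at (\<theta> k)"
    using assms by (intro holomorphic_on_imp_differentiable_at) auto
  ultimately show ?thesis
    unfolding pdiff_def by (simp add: prod_fun_upd[OF assms(1)] mult.commute)
qed

lemma D_coord_iter_prod_fun:
  assumes "k < n" "open S" "\<forall>j<n. F j holomorphic_on S" "\<theta> \<in> {..<n} \<rightarrow> S"
  shows "(D_coord k ^^ m) (prod_fun n F) \<theta>
    = prod_fun n (F(k := (\<lambda>z. (- \<i>) ^ m * (deriv ^^ m) (F k) z))) \<theta>"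
  using assms(4)
proof (induction m arbitrary: \<theta>)
  case 0
  then show ?case by simp
next
  case (Suc m)
  let ?Fm = "F(k := (\<lambda>z. (- \<i>) ^ m * (deriv ^^ m) (F k) z))"
  have hol: "?Fm k holomorphic_on S"
    using assms by (auto intro!: holomorphic_intros)
  have "\<theta> k \<in> S" using Suc.prems assms(1) by auto
  then have deriv_Fm: "deriv (?Fm k) (\<theta> k) = (- \<i>) ^ m * (deriv ^^ Suc m) (F k) (\<theta> k)"
    using assms(1-3) by (auto intro!: deriv_cmult holomorphic_on_imp_differentiable_at
        holomorphic_higher_deriv)
  have "\<forall>\<theta>\<in>{..<n} \<rightarrow> S. (D_coord k ^^ m) (prod_fun n F) \<theta> = prod_fun n ?Fm \<theta>"
    using Suc.IH by blast
  then have "(D_coord k ^^ Suc m) (prod_fun n F) \<theta> = - \<i> * pdiff k (prod_fun n ?Fm) \<theta>"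
    using pdiff_cong[OF assms(2) _ Suc.prems] by simp
  also have "\<dots> = - \<i> * prod_fun n (?Fm(k := deriv (?Fm k))) \<theta>"
    using pdiff_prod_fun[of k n S ?Fm, OF assms(1,2) hol Suc.prems] by simp
  also have "\<dots> = prod_fun n (F(k := (\<lambda>z. (- \<i>) ^ Suc m * (deriv ^^ Suc m) (F k) z))) \<theta>"
    unfolding prod_fun_upd[OF assms(1)] deriv_Fm by simp
  finally show ?case .
qed

lemma Dmulti_prod_fun_aux:
  assumes "k \<le> n" "open S" "\<forall>j<n. F j holomorphic_on S" "\<theta> \<in> {..<n} \<rightarrow> S"
  shows "Dmulti k r (prod_fun n F) \<theta>
    = prod_fun n (\<lambda>j. if j < k then (\<lambda>z. (- \<i>) ^ r j * (deriv ^^ r j) (F j) z) else F j) \<theta>"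
  using assms(1,4)
proof (induction k arbitrary: \<theta>)
  case 0
  then show ?case by simp
next
  case (Suc k)
  let ?Fk = "\<lambda>j. if j < k then (\<lambda>z. (- \<i>) ^ r j * (deriv ^^ r j) (F j) z) else F j"
  have hol: "\<forall>j<n. ?Fk j holomorphic_on S"
    using assms by (auto intro!: holomorphic_intros)
  have "?Fk(k := (\<lambda>z. (- \<i>) ^ r k * (deriv ^^ r k) (?Fk k) z))
      = (\<lambda>j. if j < Suc k then (\<lambda>z. (- \<i>) ^ r j * (deriv ^^ r j) (F j) z) else F j)"
    by (auto simp: fun_eq_iff)
  moreover have "Dmulti (Suc k) r (prod_fun n F) \<theta> = (D_coord k ^^ r k) (prod_fun n ?Fk) \<theta>"
    using D_coord_iter_cong[OF assms(2), of n "Dmulti k r (prod_fun n F)" "prod_fun n ?Fk"] Suc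
    by simp
  ultimately show ?case
    using D_coord_iter_prod_fun[OF _ assms(2) hol Suc.prems(2)] Suc.prems(1) by simp
qed

lemma Dmulti_prod_fun:
  assumes "open S" "\<forall>j<n. F j holomorphic_on S" "\<theta> \<in> {..<n} \<rightarrow> S"
  shows "Dmulti n r (prod_fun n F) \<theta> = (\<Prod>j<n. (- \<i>) ^ r j * (deriv ^^ r j) (F j) (\<theta> j))"
  using Dmulti_prod_fun_aux[OF order_refl assms] by (simp add: prod_fun_def)

section \<open>Linear independence\<close>

lemma higher_deriv_const_divide:
  fixes a z :: complex
  assumes "z \<noteq> 0"
  shows "(deriv ^^ m) (\<lambda>w. a / w) z = a * (- 1) ^ m * fact m / z ^ (m + 1)"
  using assms
proof (induction m arbitrary: z)
  case 0
  then show ?case by simp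
next
  case (Suc m)
  let ?C = "a * (- 1) ^ m * fact m"
  have "\<forall>\<^sub>F w in nhds z. w \<in> - {0}"
    using Suc.prems by (intro eventually_nhds_in_open) auto
  then have "\<forall>\<^sub>F w in nhds z. (deriv ^^ m) (\<lambda>w. a / w) w = ?C / w ^ (m + 1)"
    by eventually_elim (use Suc.IH in auto)
  then have "(deriv ^^ Suc m) (\<lambda>w. a / w) z = deriv (\<lambda>w. ?C / w ^ (m + 1)) z"
    using deriv_cong_ev[OF _ refl] by simp
  also have "\<dots> = - ?C * of_nat (m + 1) / z ^ (m + 2)"
    by (rule DERIV_imp_deriv)
      (use Suc.prems in \<open>auto intro!: derivative_eq_intros simp: field_simps power2_eq_square; cases m; auto\<close>)
  also have "\<dots> = a * (- 1) ^ Suc m * fact (Suc m) / z ^ (Suc m + 1)"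
    by (simp add: algebra_simps)
  finally show ?case .
qed

lemma higher_deriv_simple_pole:
  assumes K: "K holomorphic_on ball 0 \<rho>" and f: "\<forall>z\<in>ball 0 \<rho> - {0}. f z = K z / z"
  obtains h where "h holomorphic_on ball 0 \<rho>"
    and "\<And>m z. z \<in> ball 0 \<rho> - {0} \<Longrightarrow>
      (deriv ^^ m) f z = K 0 * (- 1) ^ m * fact m / z ^ (m + 1) + (deriv ^^ m) h z"
proof
  let ?S = "ball 0 \<rho> - {0}"
  define h where "h z = (if z = 0 then deriv K 0 else (K z - K 0) / (z - 0))" for z
  show h: "h holomorphic_on ball 0 \<rho>"
    unfolding h_def by (rule pole_lemma_open[OF K]) simp
  have f_eq: "f z = K 0 / z + h z" if "z \<in> ?S" for z
    using f that by (auto simp: h_def diff_divide_distrib)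
  have h_S: "h holomorphic_on ?S"
    using h by (rule holomorphic_on_subset) auto
  have inv_S: "(\<lambda>w. K 0 / w) holomorphic_on ?S"
    by (intro holomorphic_intros) auto
  have "(\<lambda>w. K 0 / w + h w) holomorphic_on ?S"
    by (rule holomorphic_on_add[OF inv_S h_S])
  then have "f holomorphic_on ?S"
    by (rule holomorphic_transform) (simp add: f_eq)
  fix m and z :: complex assume z: "z \<in> ?S"
  have "(deriv ^^ m) f z = (deriv ^^ m) (\<lambda>w. K 0 / w + h w) z"
    by (rule higher_deriv_transform_within_open[OF \<open>f holomorphic_on ?S\<close> _ _ z])
      (use h_S inv_S f_eq in \<open>auto intro!: holomorphic_intros\<close>)
  also have "\<dots> = (deriv ^^ m) (\<lambda>w. K 0 / w) z + (deriv ^^ m) h z"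
    by (rule higher_deriv_add[OF inv_S h_S _ z]) auto
  finally show "(deriv ^^ m) f z = K 0 * (- 1) ^ m * fact m / z ^ (m + 1) + (deriv ^^ m) h z"
    using z by (simp add: higher_deriv_const_divide)
qed

lemma isCont_vanishing_right_imp_zero:
  fixes g :: "complex \<Rightarrow> complex"
  assumes "isCont g 0" "0 < \<rho>" "\<forall>x\<in>{0<..<\<rho>}. g (of_real x) = 0"
  shows "g 0 = 0"
proof -
  have "((\<lambda>x::real. of_real x :: complex) \<longlongrightarrow> 0) (at_right 0)"
    using tendsto_of_real[OF tendsto_ident_at[of 0 "{0<..}"], where 'a = complex] by simp
  then have "((\<lambda>x. g (of_real x)) \<longlongrightarrow> g 0) (at_right 0)"
    by (rule isCont_tendsto_compose[OF assms(1)])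
  moreover have "\<forall>\<^sub>F x in at_right 0. g (of_real x) = 0"
    using eventually_at_right_real[OF assms(2)] by eventually_elim (use assms(3) in auto)
  then have "((\<lambda>x. g (of_real x)) \<longlongrightarrow> 0) (at_right 0)"
    by (rule tendsto_eventually)
  ultimately show ?thesis
    using tendsto_unique[OF trivial_limit_at_right_real] by blast
qed

text \<open>Multiplying by \<open>z\<^sup>N\<^sup>+\<^sup>1\<close>, with \<open>N\<close> the highest order carrying a nonzero
  coefficient, leaves a function continuous at 0 whose value there is that coefficient times
  a nonzero constant.\<close>
lemma higher_derivs_simple_pole_independent:
  fixes f K :: "complex \<Rightarrow> complex" and b :: "nat \<Rightarrow> complex"
  assumes "0 < \<rho>" and K: "K holomorphic_on ball 0 \<rho>" "K 0 \<noteq> 0"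
    and f: "\<forall>z\<in>ball 0 \<rho> - {0}. f z = K z / z"
    and M: "finite M" and sum0: "\<forall>x\<in>{0<..<\<rho>}. (\<Sum>m\<in>M. b m * (deriv ^^ m) f (of_real x)) = 0"
  shows "\<forall>m\<in>M. b m = 0"
proof (rule ccontr)
  obtain h where h: "h holomorphic_on ball 0 \<rho>"
    and f_derivs: "\<And>m z. z \<in> ball 0 \<rho> - {0} \<Longrightarrow>
      (deriv ^^ m) f z = K 0 * (- 1) ^ m * fact m / z ^ (m + 1) + (deriv ^^ m) h z"
    using higher_deriv_simple_pole[OF K(1) f] by blast
  define M' where "M' = {m \<in> M. b m \<noteq> 0}"
  define N where "N = Max M'"
  assume "\<not> (\<forall>m\<in>M. b m = 0)"
  then have M': "finite M'" "M' \<noteq> {}" using M by (auto simp: M'_def)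
  then have N: "N \<in> M'" "\<And>m. m \<in> M' \<Longrightarrow> m \<le> N" by (auto simp: N_def)
  define g where "g z = (\<Sum>m\<in>M'. b m * (K 0 * (- 1) ^ m * fact m * z ^ (N - m)
      + z ^ (N + 1) * (deriv ^^ m) h z))" for z
  have "g (of_real x) = 0" if x: "x \<in> {0<..<\<rho>}" for x
  proof -
    let ?z = "complex_of_real x"
    have z: "?z \<in> ball 0 \<rho> - {0}" using x by auto
    have "g ?z = ?z ^ (N + 1) * (\<Sum>m\<in>M'. b m * (deriv ^^ m) f ?z)"
      unfolding g_def sum_distrib_left
    proof (rule sum.cong[OF refl])
      fix m assume "m \<in> M'"
      then have "?z ^ m * ?z ^ (N - m) = ?z ^ N"
        using N(2) by (simp flip: power_add)
      then show "b m * (K 0 * (- 1) ^ m * fact m * ?z ^ (N - m) + ?z ^ (N + 1) * (deriv ^^ m) h ?z)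
          = ?z ^ (N + 1) * (b m * (deriv ^^ m) f ?z)"
        unfolding f_derivs[OF z] using z by (simp add: field_simps)
    qed
    also have "(\<Sum>m\<in>M'. b m * (deriv ^^ m) f ?z) = (\<Sum>m\<in>M. b m * (deriv ^^ m) f ?z)"
      by (rule sum.mono_neutral_left) (auto simp: M M'_def)
    finally show ?thesis using sum0 x by simp
  qed
  moreover have "isCont g 0"
  proof -
    have "isCont ((deriv ^^ m) h) 0" for m
      using holomorphic_on_imp_continuous_on[OF holomorphic_higher_deriv[OF h, of m]] \<open>0 < \<rho>\<close>
      by (simp add: continuous_on_eq_continuous_at)
    then show ?thesis unfolding g_def by (intro continuous_intros)
  qed
  ultimately have "g 0 = 0"
    using isCont_vanishing_right_imp_zero \<open>0 < \<rho>\<close> by blast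
  moreover have "g 0 = b N * (K 0 * (- 1) ^ N * fact N)"
    unfolding g_def using M'(1) N by (subst sum.remove[of _ N]) (auto intro!: sum.neutral dest: N(2))
  ultimately show False
    using N(1) K(2) by (simp add: M'_def)
qed

lemma prod_family_slice_vanishes:
  fixes g :: "nat \<Rightarrow> 'a \<Rightarrow> 'b::comm_ring_1" and a :: "(nat \<Rightarrow> nat) \<Rightarrow> 'b"
  assumes indep: "\<And>M b. finite M \<Longrightarrow> \<forall>x\<in>A. (\<Sum>m\<in>M. b m * g m x) = 0 \<Longrightarrow> \<forall>m\<in>M. b m = 0"
    and R: "finite R"
    and vanish: "\<forall>y. (\<forall>j<Suc n. y j \<in> A) \<longrightarrow> (\<Sum>r\<in>R. a r * (\<Prod>j<Suc n. g (r j) (y j))) = 0"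
    and y: "\<forall>j<n. y j \<in> A"
  shows "(\<Sum>r\<in>{r \<in> R. r n = m}. a r * (\<Prod>j<n. g (r j) (y j))) = 0"
proof (cases "m \<in> (\<lambda>r. r n) ` R")
  case False
  then have "{r \<in> R. r n = m} = {}" by blast
  then show ?thesis by (simp only: sum.empty)
next
  case True
  define b where "b m = (\<Sum>r\<in>{r \<in> R. r n = m}. a r * (\<Prod>j<n. g (r j) (y j)))" for m
  have "\<forall>x\<in>A. (\<Sum>m\<in>(\<lambda>r. r n) ` R. b m * g m x) = 0"
  proof
    fix x assume x: "x \<in> A"
    have "(\<Sum>m\<in>(\<lambda>r. r n) ` R. b m * g m x)
        = (\<Sum>m\<in>(\<lambda>r. r n) ` R. \<Sum>r\<in>{r \<in> R. r n = m}. a r * (\<Prod>j<Suc n. g (r j) ((y(n := x)) j)))"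
      unfolding b_def sum_distrib_right by (intro sum.cong refl) (simp add: mult.assoc)
    also have "\<dots> = (\<Sum>r\<in>R. a r * (\<Prod>j<Suc n. g (r j) ((y(n := x)) j)))"
      by (rule sum.image_gen[OF R, symmetric])
    also have "\<dots> = 0"
    proof -
      have "\<forall>j<Suc n. (y(n := x)) j \<in> A"
        using y x by (simp add: less_Suc_eq)
      with vanish show ?thesis by blast
    qed
    finally show "(\<Sum>m\<in>(\<lambda>r. r n) ` R. b m * g m x) = 0" .
  qed
  with indep[of "(\<lambda>r. r n) ` R" b] R True have "b m = 0"
    by blast
  then show ?thesis
    by (simp add: b_def)
qed

lemma prod_family_independent:
  fixes g :: "nat \<Rightarrow> 'a \<Rightarrow> 'b::comm_ring_1" and a :: "(nat \<Rightarrow> nat) \<Rightarrow> 'b"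
  assumes indep: "\<And>M b. finite M \<Longrightarrow> \<forall>x\<in>A. (\<Sum>m\<in>M. b m * g m x) = 0 \<Longrightarrow> \<forall>m\<in>M. b m = 0"
    and "finite R" "R \<subseteq> multi_idx n"
    and "\<forall>y. (\<forall>j<n. y j \<in> A) \<longrightarrow> (\<Sum>r\<in>R. a r * (\<Prod>j<n. g (r j) (y j))) = 0"
  shows "\<forall>r\<in>R. a r = 0"
  using assms(2-)
proof (induction n arbitrary: R a)
  case 0
  then have "R \<subseteq> {\<lambda>_. 0}"
    by (auto simp: multi_idx_def)
  then have "R = {} \<or> R = {\<lambda>_. 0}"
    by blast
  with "0.prems"(3) show ?case
    by auto
next
  case (Suc n)
  show ?case
  proof
    fix r0 assume r0: "r0 \<in> R"
    define R0 where "R0 = {r \<in> R. r n = r0 n}"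
    have restore: "r(n := r0 n) = r" if "r \<in> R0" for r
      using that by (auto simp: R0_def)
    have inj: "inj_on (\<lambda>r. r(n := 0)) R0"
      by (rule inj_onI) (metis restore fun_upd_upd)
    have "\<forall>\<rho>\<in>(\<lambda>r. r(n := 0)) ` R0. a (\<rho>(n := r0 n)) = 0"
    proof (rule Suc.IH)
      show "finite ((\<lambda>r. r(n := 0)) ` R0)"
        using Suc.prems(1) by (simp add: R0_def)
      show "(\<lambda>r. r(n := 0)) ` R0 \<subseteq> multi_idx n"
        using Suc.prems(2) by (auto simp: R0_def multi_idx_def)
      show "\<forall>y. (\<forall>j<n. y j \<in> A) \<longrightarrow>
          (\<Sum>\<rho>\<in>(\<lambda>r. r(n := 0)) ` R0. a (\<rho>(n := r0 n)) * (\<Prod>j<n. g (\<rho> j) (y j))) = 0"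
      proof (intro allI impI)
        fix y :: "nat \<Rightarrow> 'a" assume y: "\<forall>j<n. y j \<in> A"
        have "(\<Sum>\<rho>\<in>(\<lambda>r. r(n := 0)) ` R0. a (\<rho>(n := r0 n)) * (\<Prod>j<n. g (\<rho> j) (y j)))
            = (\<Sum>r\<in>R0. a r * (\<Prod>j<n. g (r j) (y j)))"
          unfolding sum.reindex[OF inj] o_def by (intro sum.cong refl) (simp add: restore)
        also have "\<dots> = 0"
          unfolding R0_def by (rule prod_family_slice_vanishes[OF indep Suc.prems(1,3) y])
        finally show "(\<Sum>\<rho>\<in>(\<lambda>r. r(n := 0)) ` R0. a (\<rho>(n := r0 n)) * (\<Prod>j<n. g (\<rho> j) (y j))) = 0" .
      qed
    qed
    moreover have "r0(n := 0) \<in> (\<lambda>r. r(n := 0)) ` R0"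
      using r0 by (auto simp: R0_def)
    ultimately have "a ((r0(n := 0))(n := r0 n)) = 0"
      by blast
    then show "a r0 = 0"
      by simp
  qed
qed

lemma rat_independent_imp_inj_on:
  fixes u :: "nat \<Rightarrow> real"
  assumes indep: "\<forall>q :: nat \<Rightarrow> rat. (\<Sum>j<n. of_rat (q j) * u j) = 0 \<longrightarrow> (\<forall>j<n. q j = 0)"
  shows "inj_on u {..<n}"
proof (rule inj_onI, rule ccontr)
  fix i j assume ij: "i \<in> {..<n}" "j \<in> {..<n}" "u i = u j" "i \<noteq> j"
  define q :: "nat \<Rightarrow> rat" where "q k = (if k = i then 1 else if k = j then -1 else 0)" for k
  have "(\<Sum>k<n. of_rat (q k) * u k) = (\<Sum>k\<in>{i, j}. of_rat (q k) * u k)"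
    by (rule sum.mono_neutral_right) (use ij in \<open>auto simp: q_def\<close>)
  also have "\<dots> = 0"
    using ij by (simp add: q_def)
  finally have "q i = 0"
    using indep ij by auto
  then show False
    by (simp add: q_def)
qed

lemma rat_independent_imp_int_independent:
  fixes u :: "nat \<Rightarrow> real"
  assumes indep: "\<forall>q :: nat \<Rightarrow> rat. (\<Sum>j<n. of_rat (q j) * u j) = 0 \<longrightarrow> (\<forall>j<n. q j = 0)"
  shows "module.independent (\<lambda>r. (*) (real_of_int r)) (u ` {..<n})"
proof -
  interpret Modules.module "\<lambda>r. (*) (real_of_int r)"
    by (simp add: Modules.module.intro distrib_left mult.commute)
  note inj = rat_independent_imp_inj_on[OF indep]
  show "independent (u ` {..<n})"
    unfolding independent_explicit_module
  proof (intro allI impI)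
    fix T c v
    assume T: "finite T" "T \<subseteq> u ` {..<n}" "(\<Sum>v\<in>T. real_of_int (c v) * v) = 0" "v \<in> T"
    define J where "J = {j \<in> {..<n}. u j \<in> T}"
    have inj_J: "inj_on u J"
      using inj by (rule inj_on_subset) (auto simp: J_def)
    have image_J: "u ` J = T"
      using T(2) by (auto simp: J_def)
    define q :: "nat \<Rightarrow> rat" where "q j = (if j \<in> J then of_int (c (u j)) else 0)" for j
    have "(\<Sum>j<n. of_rat (q j) * u j) = (\<Sum>j\<in>J. real_of_int (c (u j)) * u j)"
      by (rule sum.mono_neutral_cong_right) (auto simp: q_def J_def)
    also have "\<dots> = (\<Sum>v\<in>u ` J. real_of_int (c v) * v)"
      by (simp add: sum.reindex[OF inj_J])
    also have "\<dots> = 0"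
      using T(3) image_J by simp
    finally have q0: "\<forall>j<n. q j = 0"
      using indep by blast
    obtain j where "j \<in> J" "u j = v"
      using image_J T(4) by auto
    with q0 show "c v = 0"
      by (auto simp: q_def J_def)
  qed
qed

lemma rat_independent_divide:
  fixes u :: "nat \<Rightarrow> real"
  assumes indep: "\<forall>q :: nat \<Rightarrow> rat. (\<Sum>j<n. of_rat (q j) * u j) = 0 \<longrightarrow> (\<forall>j<n. q j = 0)"
    and "P \<noteq> 0"
  shows "\<forall>q :: nat \<Rightarrow> rat. (\<Sum>j<n. of_rat (q j) * (u j / P)) = 0 \<longrightarrow> (\<forall>j<n. q j = 0)"
proof -
  have "(\<Sum>j<n. of_rat (q j) * (u j / P)) = (\<Sum>j<n. of_rat (q j) * u j) / P" for q :: "nat \<Rightarrow> rat"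
    by (simp add: sum_divide_distrib)
  with indep \<open>P \<noteq> 0\<close> show ?thesis
    by (metis divide_eq_0_iff)
qed

text \<open>Kronecker's theorem: the line \<open>t \<mapsto> t u\<close> is dense in the torus \<open>\<real>\<^sup>n / P \<int>\<^sup>n\<close>.\<close>
lemma rat_independent_line_approx:
  fixes u y :: "nat \<Rightarrow> real"
  assumes indep: "\<forall>q :: nat \<Rightarrow> rat. (\<Sum>j<n. of_rat (q j) * u j) = 0 \<longrightarrow> (\<forall>j<n. q j = 0)"
    and "0 < P"
  obtains T :: "nat \<Rightarrow> real" and H :: "nat \<Rightarrow> nat \<Rightarrow> int"
  where "\<And>j. j < n \<Longrightarrow> (\<lambda>k. T k * u j - P * of_int (H k j)) \<longlonglongrightarrow> y j"
proof -
  have "P \<noteq> 0"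
    using \<open>0 < P\<close> by simp
  note scaled_indep = rat_independent_divide[OF indep this]
  note scaled = rat_independent_imp_int_independent[OF scaled_indep] rat_independent_imp_inj_on[OF scaled_indep]
  have "\<exists>t h. \<forall>j<n. \<bar>t * (u j / P) - of_int (h j) - y j / P\<bar> < 1 / (P * real (Suc k))" for k
  proof -
    have pos: "1 / (P * real (Suc k)) > 0"
      using \<open>0 < P\<close> by simp
    obtain t h where "\<And>j. j < n \<Longrightarrow> \<bar>t * (u j / P) - of_int (h j) - y j / P\<bar> < 1 / (P * real (Suc k))"
      by (rule Kronecker_thm_1[OF scaled pos, where \<alpha> = "\<lambda>j. y j / P"]) blast
    then show ?thesis by blast
  qed
  then obtain T H where TH: "\<And>k j. j < n \<Longrightarrow> \<bar>T k * (u j / P) - of_int (H k j) - y j / P\<bar> < 1 / (P * real (Suc k))"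
    by metis
  show ?thesis
  proof (rule that)
    fix j assume "j < n"
    have "\<bar>(T k * u j - P * of_int (H k j)) - y j\<bar> \<le> 1 / real (Suc k)" for k
    proof -
      have "(T k * u j - P * of_int (H k j)) - y j = P * (T k * (u j / P) - of_int (H k j) - y j / P)"
        using \<open>0 < P\<close> by (simp add: field_simps)
      then have "\<bar>(T k * u j - P * of_int (H k j)) - y j\<bar> = P * \<bar>T k * (u j / P) - of_int (H k j) - y j / P\<bar>"
        using \<open>0 < P\<close> by (simp add: abs_mult)
      also have "\<dots> \<le> P * (1 / (P * real (Suc k)))"
        using TH[OF \<open>j < n\<close>, of k] \<open>0 < P\<close> by (intro mult_left_mono) auto
      finally show ?thesis
        using \<open>0 < P\<close> by simp
    qed
    then have "(\<lambda>k. (T k * u j - P * of_int (H k j)) - y j) \<longlonglongrightarrow> 0"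
      by (intro Lim_null_comparison[OF _ LIMSEQ_inverse_real_of_nat]) (auto simp: divide_inverse)
    then show "(\<lambda>k. T k * u j - P * of_int (H k j)) \<longlonglongrightarrow> y j"
      by (simp add: LIM_zero_iff)
  qed
qed

section \<open>The function \<open>G\<close>\<close>

definition G :: "complex \<Rightarrow> complex" where
  "G z = exp (\<i> * z / 2) / (1 - exp (\<i> * z))"

definition G_domain :: "complex set" where
  "G_domain = {z. exp (\<i> * z) \<noteq> 1}"

lemma open_G_domain: "open G_domain"
proof -
  have "G_domain = (\<lambda>z. exp (\<i> * z)) -` (- {1})"
    by (auto simp: G_domain_def)
  moreover have "open ((\<lambda>z. exp (\<i> * z)) -` (- {1}))"
    by (rule open_vimage) (auto intro!: continuous_intros)
  ultimately show ?thesis by simp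
qed

lemma holomorphic_G: "G holomorphic_on G_domain"
  unfolding G_def G_domain_def by (auto intro!: holomorphic_intros)

lemma Fth_eq_prod_fun: "Fth n t = prod_fun n (\<lambda>_ z. G (of_real t * z))"
proof
  fix \<theta> :: "nat \<Rightarrow> complex"
  have "exp (\<i> * of_real t / 2 * (\<Sum>j<n. \<theta> j)) = (\<Prod>j<n. exp (\<i> * (of_real t * \<theta> j) / 2))"
    by (simp add: sum_distrib_left exp_sum[symmetric] sum_divide_distrib algebra_simps)
  then show "Fth n t \<theta> = prod_fun n (\<lambda>_ z. G (of_real t * z)) \<theta>"
    unfolding Fth_def prod_fun_def G_def by (simp add: prod_dividef mult.assoc)
qed

lemma scaled_Dmulti_Fth:
  assumes "t \<in> tdom n u" "t \<noteq> 0"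
  shows "(1 / of_real t) ^ mabs n r * Dmulti n r (Fth n t) (\<lambda>j. of_real (u j))
    = (- \<i>) ^ mabs n r * (\<Prod>j<n. (deriv ^^ r j) G (of_real (t * u j)))"
proof -
  let ?S = "(\<lambda>z. of_real t * z) -` G_domain"
  have S: "open ?S"
    by (rule open_vimage[OF open_G_domain]) (auto intro!: continuous_intros)
  have hol: "(\<lambda>z. G (of_real t * z)) holomorphic_on ?S"
    using holomorphic_on_compose_gen[of "\<lambda>z. of_real t * z" ?S G G_domain] holomorphic_G
    by (auto simp: o_def intro!: holomorphic_intros)
  have u: "(\<lambda>j. of_real (u j)) \<in> {..<n} \<rightarrow> ?S"
    using assms(1) by (auto simp: tdom_def G_domain_def mult.assoc)
  have "Dmulti n r (Fth n t) (\<lambda>j. of_real (u j))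
      = (\<Prod>j<n. (- \<i>) ^ r j * (deriv ^^ r j) (\<lambda>z. G (of_real t * z)) (of_real (u j)))"
    unfolding Fth_eq_prod_fun by (rule Dmulti_prod_fun[OF S _ u]) (use hol in simp)
  also have "\<dots> = (\<Prod>j<n. (- \<i>) ^ r j * (of_real t ^ r j * (deriv ^^ r j) G (of_real (t * u j))))"
  proof (rule prod.cong[OF refl])
    fix j assume "j \<in> {..<n}"
    with u have "(deriv ^^ r j) (\<lambda>z. G (of_real t * z)) (of_real (u j))
        = of_real t ^ r j * (deriv ^^ r j) G (of_real t * of_real (u j))"
      by (intro higher_deriv_compose_linear[OF holomorphic_G S open_G_domain]) auto
    then show "(- \<i>) ^ r j * (deriv ^^ r j) (\<lambda>z. G (of_real t * z)) (of_real (u j))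
        = (- \<i>) ^ r j * (of_real t ^ r j * (deriv ^^ r j) G (of_real (t * u j)))"
      by simp
  qed
  also have "\<dots> = (- \<i>) ^ mabs n r * of_real t ^ mabs n r * (\<Prod>j<n. (deriv ^^ r j) G (of_real (t * u j)))"
    by (simp add: prod.distrib mabs_def power_sum)
  finally show ?thesis
    using assms(2) by (simp add: field_simps)
qed

lemma exp_i_neq_1:
  assumes "cmod z < 2 * pi" "z \<noteq> 0"
  shows "exp (\<i> * z) \<noteq> 1"
proof
  assume "exp (\<i> * z) = 1"
  then obtain k :: int where k: "Im z = 0" "Re z = of_int (2 * k) * pi"
    unfolding exp_eq_1 by auto
  have "\<bar>Re z\<bar> < 2 * pi"
    using assms(1) abs_Re_le_cmod[of z] by linarith
  with k have "\<bar>real_of_int k\<bar> < 1"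
    by (simp add: abs_mult)
  then have "k = 0" by linarith
  with k have "z = 0" by (simp add: complex_eq_iff)
  with assms(2) show False ..
qed

lemma of_real_in_G_domain: "0 < x \<Longrightarrow> x < 2 * pi \<Longrightarrow> complex_of_real x \<in> G_domain"
  using exp_i_neq_1[of "complex_of_real x"] by (auto simp: G_domain_def)

text \<open>\<open>G\<close> has a simple pole at 0, since \<open>1 - e\<^sup>i\<^sup>z = z Q(z)\<close> with \<open>Q\<close> entire and \<open>Q(0) = -i\<close>.\<close>
lemma G_simple_pole:
  obtains K where "K holomorphic_on ball 0 (2 * pi)" "K 0 \<noteq> 0"
    "\<forall>z\<in>ball 0 (2 * pi) - {0}. G z = K z / z"
proof -
  define E where "E = (\<lambda>z. 1 - exp (\<i> * z))"
  define Q where "Q z = (if z = 0 then deriv E 0 else (E z - E 0) / (z - 0))" for z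
  have "Q holomorphic_on UNIV"
    unfolding Q_def by (rule pole_lemma_open) (auto simp: E_def intro!: holomorphic_intros)
  moreover have Q0: "Q 0 = - \<i>"
  proof -
    have "(E has_field_derivative - \<i>) (at 0)"
      unfolding E_def by (auto intro!: derivative_eq_intros)
    then show ?thesis by (simp add: Q_def DERIV_imp_deriv)
  qed
  moreover have "Q z \<noteq> 0" if "z \<in> ball 0 (2 * pi)" for z
    using Q0 exp_i_neq_1[of z] that by (auto simp: Q_def E_def)
  ultimately have "(\<lambda>z. exp (\<i> * z / 2) / Q z) holomorphic_on ball 0 (2 * pi)"
    by (auto intro!: holomorphic_intros intro: holomorphic_on_subset)
  moreover have "G z = exp (\<i> * z / 2) / Q z / z" if "z \<noteq> 0" for z
    using that by (simp add: G_def Q_def E_def)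
  ultimately show ?thesis
    using that[of "\<lambda>z. exp (\<i> * z / 2) / Q z"] Q0 by simp
qed

lemma G_higher_derivs_independent:
  assumes "finite M" "\<forall>x\<in>{0<..<2 * pi}. (\<Sum>m\<in>M. b m * (deriv ^^ m) G (of_real x)) = 0"
  shows "\<forall>m\<in>M. b m = 0"
proof -
  obtain K where "K holomorphic_on ball 0 (2 * pi)" "K 0 \<noteq> 0"
    "\<forall>z\<in>ball 0 (2 * pi) - {0}. G z = K z / z"
    using G_simple_pole by blast
  from higher_derivs_simple_pole_independent[OF _ this assms] show ?thesis
    by simp
qed

lemma exp_i_shift_4pi:
  "exp (\<i> * (z + of_real (4 * pi * of_int h)) / 2) = exp (\<i> * z / 2)"
  "exp (\<i> * (z + of_real (4 * pi * of_int h))) = exp (\<i> * z)"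
proof -
  have "\<i> * (z + of_real (4 * pi * of_int h)) / 2 = \<i> * z / 2 + \<i> * (of_int h * (of_real pi * 2))"
    by (simp add: algebra_simps)
  then show "exp (\<i> * (z + of_real (4 * pi * of_int h)) / 2) = exp (\<i> * z / 2)"
    by (simp only: exp_plus_2pin)
  have "\<i> * (z + of_real (4 * pi * of_int h)) = \<i> * z + \<i> * (of_int (2 * h) * (of_real pi * 2))"
    by (simp add: algebra_simps)
  then show "exp (\<i> * (z + of_real (4 * pi * of_int h))) = exp (\<i> * z)"
    by (simp only: exp_plus_2pin)
qed

lemma G_periodic: "G (z + of_real (4 * pi * of_int h)) = G z"
  unfolding G_def by (simp only: exp_i_shift_4pi)

lemma G_domain_periodic: "z \<in> G_domain \<Longrightarrow> z + of_real (4 * pi * of_int h) \<in> G_domain"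
  unfolding G_domain_def mem_Collect_eq by (simp only: exp_i_shift_4pi not_False_eq_True)

lemma higher_deriv_G_periodic:
  assumes "z \<in> G_domain"
  shows "(deriv ^^ m) G (z + of_real (4 * pi * of_int h)) = (deriv ^^ m) G z"
proof -
  let ?c = "complex_of_real (4 * pi * of_int h)"
  have "(deriv ^^ m) G z = (deriv ^^ m) (\<lambda>w. G (1 * w + ?c)) z"
    by (simp only: mult_1_left G_periodic)
  also have "\<dots> = 1 ^ m * (deriv ^^ m) G (1 * z + ?c)"
    by (rule higher_deriv_compose_linear'[OF holomorphic_G open_G_domain open_G_domain assms])
      (simp only: mult_1_left G_domain_periodic)
  finally show ?thesis
    by simp
qed

section \<open>Independence of the top-weight terms\<close>

definition top_terms :: "nat \<Rightarrow> nat \<Rightarrow> (nat \<Rightarrow> nat) set" where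
  "top_terms n s = {r \<in> multi_idx n. 1 \<le> mabs n r \<and> 2 * mabs n r \<le> s + 2}"

lemma top_weight_terms:
  "{(r, i) \<in> terms n s. wt n r i = s} = (\<lambda>r. (r, s + 2 - 2 * mabs n r)) ` top_terms n s"
  by (auto simp: terms_def top_terms_def wt_def image_iff)

lemma finite_top_terms: "finite (top_terms n s)"
proof -
  have "top_terms n s = fst ` {(r, i) \<in> terms n s. wt n r i = s}"
    unfolding top_weight_terms image_image by simp
  moreover have "finite {(r, i) \<in> terms n s. wt n r i = s}"
    by (rule finite_subset[OF _ finite_terms[of n s]]) auto
  ultimately show ?thesis by simp
qed

lemma VCoef_top_weight:
  assumes "t \<in> tdom n u" "t \<noteq> 0"
  shows "VCoef n u c s t = (\<Sum>r\<in>top_terms n s. of_real (c r (s + 2 - 2 * mabs n r))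
    * ((- \<i>) ^ mabs n r * (\<Prod>j<n. (deriv ^^ r j) G (of_real (t * u j)))))"
proof -
  let ?V = "\<lambda>r. (- \<i>) ^ mabs n r * (\<Prod>j<n. (deriv ^^ r j) G (of_real (t * u j)))"
  have "VCoef n u c s t = (\<Sum>(r, i)\<in>terms n s. if wt n r i = s then of_real (c r i) * ?V r else 0)"
    unfolding VCoef_def One_nat_def Pw.simps(2)
  proof (rule sum.cong[OF refl], clarify)
    fix r i assume "(r, i) \<in> terms n s"
    then have "wt n r i \<le> s" by (simp add: terms_def)
    then show "of_real (c r i) * (1 / of_real t) ^ mabs n r * Dmulti n r (Pw n c t 0 (s - wt n r i))
        (\<lambda>j. of_real (u j)) = (if wt n r i = s then of_real (c r i) * ?V r else 0)"
      using scaled_Dmulti_Fth[OF assms, of r] by (auto simp: Dmulti_zero mult.assoc)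
  qed
  also have "\<dots> = (\<Sum>(r, i)\<in>{(r, i) \<in> terms n s. wt n r i = s}. of_real (c r i) * ?V r)"
    by (intro sum.mono_neutral_cong_right) (auto simp: finite_terms split: if_splits)
  also have "\<dots> = (\<Sum>r\<in>top_terms n s. of_real (c r (s + 2 - 2 * mabs n r)) * ?V r)"
    unfolding top_weight_terms by (subst sum.reindex) (auto intro: inj_onI)
  finally show ?thesis .
qed

lemma G_prod_sum_tendsto:
  fixes x :: "nat \<Rightarrow> nat \<Rightarrow> real"
  assumes x: "\<And>j. j < n \<Longrightarrow> (\<lambda>k. x k j) \<longlonglongrightarrow> y j" and y: "\<forall>j<n. y j \<in> {0<..<2 * pi}"
  shows "(\<lambda>k. \<Sum>r\<in>R. a r * (\<Prod>j<n. (deriv ^^ r j) G (of_real (x k j))))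
    \<longlonglongrightarrow> (\<Sum>r\<in>R. a r * (\<Prod>j<n. (deriv ^^ r j) G (of_real (y j))))"
proof (intro tendsto_intros)
  fix r j assume "j \<in> {..<n}"
  then have "isCont ((deriv ^^ r j) G) (of_real (y j))"
    using y holomorphic_on_imp_continuous_on[OF holomorphic_higher_deriv[OF holomorphic_G open_G_domain]]
    by (simp add: continuous_on_eq_continuous_at[OF open_G_domain] of_real_in_G_domain)
  moreover have "(\<lambda>k. complex_of_real (x k j)) \<longlonglongrightarrow> of_real (y j)"
    using x \<open>j \<in> {..<n}\<close> by (intro tendsto_of_real) simp
  ultimately show "(\<lambda>k. (deriv ^^ r j) G (of_real (x k j))) \<longlonglongrightarrow> (deriv ^^ r j) G (of_real (y j))"
    by (rule isCont_tendsto_compose)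
qed

lemma G_prod_sum_shift:
  assumes x: "\<forall>j<n. x j \<in> {0<..<2 * pi}" and shift: "\<And>j. t * u j = x j + 4 * pi * of_int (h j)"
  shows "t \<in> tdom n u"
    and "(\<Sum>r\<in>R. a r * (\<Prod>j<n. (deriv ^^ r j) G (of_real (t * u j))))
      = (\<Sum>r\<in>R. a r * (\<Prod>j<n. (deriv ^^ r j) G (of_real (x j))))"
proof -
  have shift': "complex_of_real (t * u j) = of_real (x j) + of_real (4 * pi * of_int (h j))" for j
    by (simp add: shift)
  show "t \<in> tdom n u"
    unfolding tdom_def
  proof (intro CollectI allI impI)
    fix j assume "j < n"
    with x have "of_real (x j) + of_real (4 * pi * of_int (h j)) \<in> G_domain"
      by (intro G_domain_periodic of_real_in_G_domain) auto
    then show "exp (\<i> * of_real t * of_real (u j)) \<noteq> 1"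
      unfolding shift'[symmetric] G_domain_def by (simp add: mult.assoc)
  qed
  show "(\<Sum>r\<in>R. a r * (\<Prod>j<n. (deriv ^^ r j) G (of_real (t * u j))))
      = (\<Sum>r\<in>R. a r * (\<Prod>j<n. (deriv ^^ r j) G (of_real (x j))))"
  proof (intro sum.cong refl arg_cong2[where f = "(*)"] prod.cong)
    fix r j assume "j \<in> {..<n}"
    with x show "(deriv ^^ r j) G (of_real (t * u j)) = (deriv ^^ r j) G (of_real (x j))"
      unfolding shift' by (intro higher_deriv_G_periodic of_real_in_G_domain) auto
  qed
qed

lemma line_sum_vanishes_on_box:
  fixes u y :: "nat \<Rightarrow> real" and a :: "(nat \<Rightarrow> nat) \<Rightarrow> complex"
  assumes indep: "\<forall>q :: nat \<Rightarrow> rat. (\<Sum>j<n. of_rat (q j) * u j) = 0 \<longrightarrow> (\<forall>j<n. q j = 0)"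
    and line: "\<forall>t\<in>tdom n u. (\<Sum>r\<in>R. a r * (\<Prod>j<n. (deriv ^^ r j) G (of_real (t * u j)))) = 0"
    and y: "\<forall>j<n. y j \<in> {0<..<2 * pi}"
  shows "(\<Sum>r\<in>R. a r * (\<Prod>j<n. (deriv ^^ r j) G (of_real (y j)))) = 0"
proof -
  define \<Phi> where "\<Phi> x = (\<Sum>r\<in>R. a r * (\<Prod>j<n. (deriv ^^ r j) G (of_real (x j))))" for x
  obtain T H where TH: "\<And>j. j < n \<Longrightarrow> (\<lambda>k. T k * u j - 4 * pi * of_int (H k j)) \<longlonglongrightarrow> y j"
    using rat_independent_line_approx[OF indep, of "4 * pi"] by auto
  define x where "x k j = T k * u j - 4 * pi * of_int (H k j)" for k j
  have "(\<lambda>k. \<Phi> (x k)) \<longlonglongrightarrow> \<Phi> y"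
    unfolding \<Phi>_def x_def by (rule G_prod_sum_tendsto[OF TH y])
  moreover have "\<forall>\<^sub>F k in sequentially. \<forall>j\<in>{..<n}. x k j \<in> {0<..<2 * pi}"
    using TH y by (intro eventually_ball_finite ballI topological_tendstoD) (auto simp: x_def)
  then have "\<forall>\<^sub>F k in sequentially. \<Phi> (x k) = 0"
  proof eventually_elim
    case (elim k)
    then have "\<forall>j<n. x k j \<in> {0<..<2 * pi}" by blast
    moreover have "T k * u j = x k j + 4 * pi * of_int (H k j)" for j
      by (simp add: x_def)
    ultimately have "T k \<in> tdom n u"
      and shifted: "(\<Sum>r\<in>R. a r * (\<Prod>j<n. (deriv ^^ r j) G (of_real (T k * u j)))) = \<Phi> (x k)"
      unfolding \<Phi>_def by (rule G_prod_sum_shift)+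
    with line show ?case
      by simp
  qed
  then have "(\<lambda>k. \<Phi> (x k)) \<longlonglongrightarrow> 0"
    by (rule tendsto_eventually)
  ultimately show ?thesis
    using LIMSEQ_unique by (auto simp: \<Phi>_def)
qed

lemma tdom_family_independent:
  fixes u :: "nat \<Rightarrow> real" and a :: "(nat \<Rightarrow> nat) \<Rightarrow> complex"
  assumes indep: "\<forall>q :: nat \<Rightarrow> rat. (\<Sum>j<n. of_rat (q j) * u j) = 0 \<longrightarrow> (\<forall>j<n. q j = 0)"
    and "finite R" "R \<subseteq> multi_idx n"
    and line: "\<forall>t\<in>tdom n u. (\<Sum>r\<in>R. a r * (\<Prod>j<n. (deriv ^^ r j) G (of_real (t * u j)))) = 0"
  shows "\<forall>r\<in>R. a r = 0"
proof (rule prod_family_independent[where A = "{0<..<2 * pi}" and g = "\<lambda>m x. (deriv ^^ m) G (of_real x)"])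
  show "\<forall>m\<in>M. b m = 0"
    if "finite M" "\<forall>x\<in>{0<..<2 * pi}. (\<Sum>m\<in>M. b m * (deriv ^^ m) G (of_real x)) = 0" for M b
    using G_higher_derivs_independent that .
  show "\<forall>y. (\<forall>j<n. y j \<in> {0<..<2 * pi}) \<longrightarrow>
      (\<Sum>r\<in>R. a r * (\<Prod>j<n. (deriv ^^ r j) G (of_real (y j)))) = 0"
    using line_sum_vanishes_on_box[OF indep line] by blast
qed (use assms in auto)

lemma top_coeffs_eq_of_VCoef_eq:
  fixes u :: "nat \<Rightarrow> real" and c c' :: "(nat \<Rightarrow> nat) \<Rightarrow> nat \<Rightarrow> real"
  assumes indep: "\<forall>q :: nat \<Rightarrow> rat. (\<Sum>j<n. of_rat (q j) * u j) = 0 \<longrightarrow> (\<forall>j<n. q j = 0)"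
    and V: "\<And>t. t \<in> tdom n u \<Longrightarrow> t \<noteq> 0 \<Longrightarrow> VCoef n u c s t = VCoef n u c' s t"
    and "(r, i) \<in> terms n s" "wt n r i = s"
  shows "c r i = c' r i"
proof -
  define \<iota> where "\<iota> r = s + 2 - 2 * mabs n r" for r
  define a where "a r = (of_real (c r (\<iota> r)) - of_real (c' r (\<iota> r))) * (- \<i>) ^ mabs n r" for r
  have "(\<Sum>r\<in>top_terms n s. a r * (\<Prod>j<n. (deriv ^^ r j) G (of_real (t * u j)))) = 0"
    if t: "t \<in> tdom n u" for t
  proof (cases "t = 0")
    case True
    with t have "top_terms n s = {}"
      by (cases n) (auto simp: tdom_def top_terms_def mabs_def)
    then show ?thesis by simp
  next
    case False
    from V[OF t False] show ?thesis
      unfolding VCoef_top_weight[OF t False] a_def \<iota>_def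
      by (simp add: left_diff_distrib sum_subtractf mult.assoc)
  qed
  then have "\<forall>r\<in>top_terms n s. a r = 0"
    by (intro tdom_family_independent[OF indep finite_top_terms]) (auto simp: top_terms_def)
  moreover from assms(3,4) have "(r, i) \<in> (\<lambda>r. (r, \<iota> r)) ` top_terms n s"
    unfolding \<iota>_def top_weight_terms[symmetric] by simp
  ultimately show ?thesis
    by (auto simp: a_def)
qed

lemma coeffs_eq_of_TrCoef_eq:
  fixes u :: "nat \<Rightarrow> real" and c c' :: "(nat \<Rightarrow> nat) \<Rightarrow> nat \<Rightarrow> real"
  assumes indep: "\<forall>q :: nat \<Rightarrow> rat. (\<Sum>j<n. of_rat (q j) * u j) = 0 \<longrightarrow> (\<forall>j<n. q j = 0)"
    and c: "BNF_coeffs n c" and c': "BNF_coeffs n c'"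
    and lower: "\<forall>(r, i)\<in>terms n s. wt n r i < s \<longrightarrow> c r i = c' r i"
    and tr: "\<forall>t\<in>tdom n u. TrCoef n u c s t = TrCoef n u c' s t"
  shows "\<forall>(r, i)\<in>terms n s. c r i = c' r i"
proof clarify
  fix r i assume ri: "(r, i) \<in> terms n s"
  then have "wt n r i < s \<or> wt n r i = s"
    by (auto simp: terms_def)
  then show "c r i = c' r i"
  proof
    assume "wt n r i = s"
    with ri show ?thesis
      using top_coeffs_eq_of_VCoef_eq[OF indep VCoef_eq_of_TrCoef_eq[OF c c' lower]] tr by blast
  qed (use ri lower in auto)
qed

theorem theorem4:
  fixes n :: nat and u :: "nat \<Rightarrow> real" and l :: nat
    and c c' :: "(nat \<Rightarrow> nat) \<Rightarrow> nat \<Rightarrow> real"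
  assumes upos: "\<forall>j<n. u j > 0"
    and uindep: "\<forall>q :: nat \<Rightarrow> rat. (\<Sum>j<n. of_rat (q j) * u j) = 0 \<longrightarrow> (\<forall>j<n. q j = 0)"
    and c: "BNF_coeffs n c" and c': "BNF_coeffs n c'"
    and tr: "\<forall>s\<le>l. \<forall>t\<in>tdom n u. TrCoef n u c s t = TrCoef n u c' s t"
  shows "\<forall>s\<le>l. \<forall>t\<in>tdom n u. VCoef n u c s t = VCoef n u c' s t"
proof -
  have agree: "\<forall>(r, i)\<in>terms n s. c r i = c' r i" if "s \<le> l" for s
    using that
  proof (induction s rule: less_induct)
    case (less s)
    have "c r i = c' r i" if "(r, i) \<in> terms n s" "wt n r i < s" for r i
    proof -
      from that(1) have "(r, i) \<in> terms n (wt n r i)"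
        by (simp add: terms_def)
      with less that(2) show ?thesis by auto
    qed
    with less.prems show ?case
      using coeffs_eq_of_TrCoef_eq[OF uindep c c'] tr by blast
  qed
  show ?thesis
  proof (intro allI impI ballI)
    fix s t assume "s \<le> l"
    show "VCoef n u c s t = VCoef n u c' s t"
      by (simp only: VCoef_def Pw_cong_coeffs[OF agree[OF \<open>s \<le> l\<close>] order_refl])
  qed
qed

end
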